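(* Let $T$ be a rooted binary phylogenetic tree with root of out-degree 2 and at least 3 leaves, under the $N_2$ model, let $y,z$ be a cherry with parent $w$, and let $T''$ and $T'_{0.5}$ be as defined in the context. Then $RA_\varphi(T'')\ge RA_\varphi(T'_{0.5})$.
   Context: A rooted binary phylogenetic tree is a finite tree with a distinguished root vertex $\rho$, all edges directed away from $\rho$, in which $\rho$ has out-degree 2 or 1, and every other vertex has in-degree 1 and out-degree 0 or 2; out-degree-0 vertices are leaves. Under the Neyman 2-state model $N_2$, each edge $e$ carries a substitution probability $p_e\in[0,\frac12]$; given the root state, states propagate independently along edges, each edge changing state with probability $p_e$. The coin-toss method $\varphi$: leaves get their observed states; proceeding towards the root, a vertex whose two children have equal states gets that state, otherwise one of the two chosen by an independent fair coin toss; a vertex with a single child gets its child's state; $RA_\varphi$ is the probability that the state assigned to the root equals the true root state. Vertices of in- and out-degree 1 may be suppressed (merging consecutive edges with substitution probabilities $a,b$ into one with probability $a+b-2ab$). $T'_{0.5}$ is obtained from $T$ by deleting $y,z$ and their incident edges, attaching a new leaf $w^\star$ to $w$ via an edge with substitution probability $\frac12$, and suppressing $w$. $T''$ is obtained from $T$ by deleting $y$, $z$, $w$ and all edges incident to them (including the edge into $w$), and suppressing the resulting vertex of in- and out-degree 1. *)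

theory Defs
  imports "HOL-Probability.Probability"
begin

text \<open>A (sub)tree below a non-root vertex of a rooted binary phylogenetic tree:
  either a leaf, or a vertex of out-degree 2 whose two outgoing edges carry
  substitution probabilities and lead to subtrees.\<close>
datatype ptree = Leaf | Node "real \<times> ptree" "real \<times> ptree"

text \<open>Rooted trees: root of out-degree 1 (one edge to a subtree) or of out-degree 2
  (then the whole tree is a ptree of the form Node).\<close>
datatype rtree = R1 real ptree | R2 ptree

fun leaves :: "ptree \<Rightarrow> nat" where
  "leaves Leaf = 1"
| "leaves (Node (_, l) (_, r)) = leaves l + leaves r"

fun valid :: "ptree \<Rightarrow> bool" where
  "valid Leaf = True"
| "valid (Node (p, l) (q, r)) =
     (0 \<le> p \<and> p \<le> 1/2 \<and> 0 \<le> q \<and> q \<le> 1/2 \<and> valid l \<and> valid r)"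

text \<open>Merging two consecutive edges with substitution probabilities a, b.\<close>
definition merge :: "real \<Rightarrow> real \<Rightarrow> real" where
  "merge a b = a + b - 2 * a * b"

definition edge :: "real \<Rightarrow> bool \<Rightarrow> bool pmf" where
  "edge p x = map_pmf (\<lambda>c. if c then \<not> x else x) (bernoulli_pmf p)"

definition coin :: "bool \<Rightarrow> bool \<Rightarrow> bool pmf" where
  "coin s1 s2 = (if s1 = s2 then return_pmf s1
                 else map_pmf (\<lambda>c. if c then s1 else s2) (bernoulli_pmf (1/2)))"

text \<open>phi t x: distribution of the state assigned by the coin-toss method to the
  top vertex of t, given that its true state is x (states evolve under N2 and
  coin tosses are independent).\<close>
fun phi :: "ptree \<Rightarrow> bool \<Rightarrow> bool pmf" where
  "phi Leaf x = return_pmf x"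
| "phi (Node (p1, t1) (p2, t2)) x =
     do { x1 \<leftarrow> edge p1 x; s1 \<leftarrow> phi t1 x1;
          x2 \<leftarrow> edge p2 x; s2 \<leftarrow> phi t2 x2;
          coin s1 s2 }"

fun phi_rt :: "rtree \<Rightarrow> bool \<Rightarrow> bool pmf" where
  "phi_rt (R2 t) x = phi t x"
| "phi_rt (R1 p t) x = do { x1 \<leftarrow> edge p x; phi t x1 }"

text \<open>Root accuracy: the root state is drawn uniformly (by the symmetry of N2 the
  value does not depend on the root distribution).\<close>
definition RA :: "rtree \<Rightarrow> real" where
  "RA T = pmf (do { x \<leftarrow> pmf_of_set (UNIV :: bool set); s \<leftarrow> phi_rt T x;
                    return_pmf (s = x) }) True"

text \<open>One-hole contexts: a position of a vertex in a ptree.  CL e c r is a vertex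
  whose left edge (probability e) leads to the hole-containing part c, and whose
  right child edge/subtree is r; CR symmetrically.\<close>
datatype ctx = Hole | CL real ctx "real \<times> ptree" | CR "real \<times> ptree" real ctx

fun plug :: "ctx \<Rightarrow> ptree \<Rightarrow> ptree" where
  "plug Hole t = t"
| "plug (CL e c r) t = Node (e, plug c t) r"
| "plug (CR l e c) t = Node l (e, plug c t)"

text \<open>Plug t into the hole, where the edge into the hole vertex is merged
  (suppression) with an extra edge of probability q.\<close>
fun plug_merge :: "ctx \<Rightarrow> real \<Rightarrow> ptree \<Rightarrow> ptree" where
  "plug_merge Hole q t = t"
| "plug_merge (CL e Hole r) q t = Node (merge e q, t) r"
| "plug_merge (CR l e Hole) q t = Node l (merge e q, t)"
| "plug_merge (CL e c r) q t = Node (e, plug_merge c q t) r"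
| "plug_merge (CR l e c) q t = Node l (e, plug_merge c q t)"

text \<open>Delete the hole vertex together with the edge into it; its parent u then
  has out-degree 1 and is suppressed (edge into u, probability g, merged with the
  remaining edge f), unless u is the root.  prune_sub g c gives the new edge
  probability and subtree replacing the edge g into the vertex described by c.\<close>
fun prune_sub :: "real \<Rightarrow> ctx \<Rightarrow> real \<times> ptree" where
  "prune_sub g Hole = (g, Leaf)"
| "prune_sub g (CL e Hole (f, s)) = (merge g f, s)"
| "prune_sub g (CR (f, s) e Hole) = (merge g f, s)"
| "prune_sub g (CL e c r) = (g, Node (prune_sub e c) r)"
| "prune_sub g (CR l e c) = (g, Node l (prune_sub e c))"

fun prune :: "ctx \<Rightarrow> rtree" where
  "prune Hole = R2 Leaf"
| "prune (CL e Hole (f, s)) = R1 f s"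
| "prune (CR (f, s) e Hole) = R1 f s"
| "prune (CL e c r) = R2 (Node (prune_sub e c) r)"
| "prune (CR l e c) = R2 (Node l (prune_sub e c))"

text \<open>For T = plug C (Node (a, Leaf) (b, Leaf)) (cherry y, z with parent w at
  the hole of C):\<close>
definition T_half :: "ctx \<Rightarrow> rtree" where
  "T_half C = R2 (plug_merge C (1/2) Leaf)"

definition T_dd :: "ctx \<Rightarrow> rtree" where
  "T_dd C = prune C"

end

theory Submission
  imports Defs
begin

text \<open>The coin-toss reconstruction on a subtree is correct with a probability (its
  accuracy) that does not depend on the true state, and which obeys a simple recursion:
  an edge with substitution probability p sends accuracy r to (1 - p) r + p (1 - r),
  and a vertex takes the mean of what its two edges deliver.  Every subtree delivers at
  least 1/2 through an edge with p \<le> 1/2, while the leaf hung on the edge with p = 1/2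
  in T'_0.5 delivers exactly 1/2.  Hence at the parent u of w, averaging with that
  uninformative leaf can only lose against keeping the sibling subtree of w alone, as
  T'' does; since transmission along edges is monotone, the comparison lifts to the
  root.\<close>

text \<open>bernoulli_pmf clamps its parameter to [0, 1]; carrying the clamp lets the
  distribution formulas below hold for every parameter, without validity hypotheses.\<close>
definition clamp01 :: "real \<Rightarrow> real" where
  "clamp01 p = min 1 (max 0 p)"

lemma pmf_bernoulli_True: "pmf (bernoulli_pmf p) True = clamp01 p"
  by (simp add: bernoulli_pmf.rep_eq clamp01_def)

lemma pmf_bernoulli_False: "pmf (bernoulli_pmf p) False = 1 - clamp01 p"
  by (simp add: bernoulli_pmf.rep_eq clamp01_def)

lemma clamp01_id: "0 \<le> p \<Longrightarrow> p \<le> 1 \<Longrightarrow> clamp01 p = p"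
  by (simp add: clamp01_def)

lemma pmf_bind_bool:
  "pmf (bind_pmf M f) y = pmf M True * pmf (f True) y + pmf M False * pmf (f False) y"
  unfolding pmf_bind by (subst integral_measure_pmf_real[of UNIV]) (auto simp: UNIV_bool)

lemma pmf_edge: "pmf (edge p x) y = (if y = x then 1 - clamp01 p else clamp01 p)"
proof -
  have "{c. c} = {True}" "{c. \<not> c} = {False}" by auto
  then show ?thesis unfolding edge_def
    by (cases x; cases y)
       (auto simp: pmf_map vimage_def pmf_bernoulli_True pmf_bernoulli_False measure_pmf_single)
qed

lemma pmf_coin: "pmf (coin s1 s2) y = (if s1 = s2 then (if y = s1 then 1 else 0) else 1/2)"
proof -
  have "{c. c} = {True}" "{c. \<not> c} = {False}" by auto
  then show ?thesis unfolding coin_def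
    by (cases s1; cases s2; cases y) (auto simp: pmf_map vimage_def measure_pmf_single)
qed

definition transmit :: "real \<Rightarrow> real \<Rightarrow> real" where
  "transmit p r = (1 - clamp01 p) * r + clamp01 p * (1 - r)"

fun accuracy :: "ptree \<Rightarrow> real" where
  "accuracy Leaf = 1"
| "accuracy (Node (p1, t1) (p2, t2)) = (transmit p1 (accuracy t1) + transmit p2 (accuracy t2)) / 2"

definition edge_accuracy :: "real \<times> ptree \<Rightarrow> real" where
  "edge_accuracy e = transmit (fst e) (accuracy (snd e))"

lemma accuracy_Node: "accuracy (Node l r) = (edge_accuracy l + edge_accuracy r) / 2"
  by (cases l; cases r) (simp add: edge_accuracy_def)

lemma edge_accuracy_Node:
  "edge_accuracy (p, Node l r) = transmit p ((edge_accuracy l + edge_accuracy r) / 2)"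
  by (simp add: edge_accuracy_def accuracy_Node)

fun accuracy_rt :: "rtree \<Rightarrow> real" where
  "accuracy_rt (R2 t) = accuracy t"
| "accuracy_rt (R1 p t) = transmit p (accuracy t)"

lemma pmf_phi: "pmf (phi t x) y = (if y = x then accuracy t else 1 - accuracy t)"
proof (induction t arbitrary: x y rule: accuracy.induct)
  case (2 p1 t1 p2 t2)
  show ?case
    by (cases x; cases y)
       (simp_all add: pmf_bind_bool pmf_edge pmf_coin 2 transmit_def algebra_simps divide_simps)
qed simp

lemma RA_eq_accuracy_rt: "RA T = accuracy_rt T"
proof -
  have "pmf (phi_rt T x) y = (if y = x then accuracy_rt T else 1 - accuracy_rt T)" for x y
    by (cases T) (auto simp: pmf_phi pmf_bind_bool pmf_edge transmit_def algebra_simps)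
  then show ?thesis unfolding RA_def by (simp add: pmf_bind_bool)
qed

lemma transmit_mono: "p \<le> 1/2 \<Longrightarrow> r \<le> r' \<Longrightarrow> transmit p r \<le> transmit p r'"
proof -
  assume "p \<le> 1/2" "r \<le> r'"
  then have "0 \<le> (1 - 2 * clamp01 p) * (r' - r)" by (simp add: clamp01_def)
  then show ?thesis by (simp add: transmit_def algebra_simps)
qed

lemma transmit_half: "transmit (1/2) r = 1/2"
  by (simp add: transmit_def clamp01_id field_simps)

lemma transmit_ge_half: "p \<le> 1/2 \<Longrightarrow> 1/2 \<le> r \<Longrightarrow> 1/2 \<le> transmit p r"
  using transmit_mono[of p "1/2" r] by (simp add: transmit_def field_simps)

lemma accuracy_ge_half: "valid t \<Longrightarrow> 1/2 \<le> accuracy t"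
proof (induction t rule: accuracy.induct)
  case (2 p1 t1 p2 t2)
  then have "1/2 \<le> transmit p1 (accuracy t1)" "1/2 \<le> transmit p2 (accuracy t2)"
    by (intro transmit_ge_half; simp)+
  then show ?case by simp
qed simp

lemma edge_accuracy_ge_half: "e \<le> 1/2 \<Longrightarrow> valid s \<Longrightarrow> 1/2 \<le> edge_accuracy (e, s)"
  unfolding edge_accuracy_def by (intro transmit_ge_half accuracy_ge_half) simp_all

lemma transmit_merge:
  assumes "0 \<le> g" "g \<le> 1/2" "0 \<le> f" "f \<le> 1/2"
  shows "transmit (merge g f) r = transmit g (transmit f r)"
proof -
  have "0 \<le> f * (1 - 2*g)" "0 \<le> (1 - 2*g) * (1 - 2*f)" using assms by simp_all
  then have "0 \<le> merge g f" "merge g f \<le> 1" using assms by (simp_all add: merge_def algebra_simps)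
  then show ?thesis using assms by (simp add: transmit_def clamp01_id merge_def algebra_simps)
qed

fun valid_ctx :: "ctx \<Rightarrow> bool" where
  "valid_ctx Hole = True"
| "valid_ctx (CL e c (f, s)) = (0 \<le> e \<and> e \<le> 1/2 \<and> 0 \<le> f \<and> f \<le> 1/2 \<and> valid s \<and> valid_ctx c)"
| "valid_ctx (CR (f, s) e c) = (0 \<le> e \<and> e \<le> 1/2 \<and> 0 \<le> f \<and> f \<le> 1/2 \<and> valid s \<and> valid_ctx c)"

lemma valid_ctx_plug: "valid (plug c t) \<Longrightarrow> valid_ctx c"
  by (induction c) auto

lemma edge_accuracy_merge_half: "edge_accuracy (merge e (1/2), t) = 1/2"
  by (simp add: edge_accuracy_def merge_def transmit_half)

lemma edge_accuracy_merge:
  "0 \<le> g \<Longrightarrow> g \<le> 1/2 \<Longrightarrow> 0 \<le> f \<Longrightarrow> f \<le> 1/2 \<Longrightarrow>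
   edge_accuracy (merge g f, s) = transmit g (edge_accuracy (f, s))"
  by (simp add: edge_accuracy_def transmit_merge)

lemma edge_accuracy_plug_merge_half_le_prune_sub:
  "valid_ctx c \<Longrightarrow> 0 \<le> g \<Longrightarrow> g \<le> 1/2 \<Longrightarrow>
   edge_accuracy (g, plug_merge c (1/2) Leaf) \<le> edge_accuracy (prune_sub g c)"
proof (induction g c rule: prune_sub.induct)
  case (2 g e f s)
  then have "1/2 \<le> edge_accuracy (f, s)" by (intro edge_accuracy_ge_half) simp_all
  with 2 show ?case
    by (simp add: edge_accuracy_Node edge_accuracy_merge_half edge_accuracy_merge transmit_mono)
next
  case (3 g f s e)
  then have "1/2 \<le> edge_accuracy (f, s)" by (intro edge_accuracy_ge_half) simp_all
  with 3 show ?case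
    by (simp add: edge_accuracy_Node edge_accuracy_merge_half edge_accuracy_merge transmit_mono)
qed (auto simp: accuracy_Node edge_accuracy_def intro!: transmit_mono)

lemma accuracy_plug_merge_half_le_prune:
  assumes "valid_ctx C"
  shows "accuracy (plug_merge C (1/2) Leaf) \<le> accuracy_rt (prune C)"
proof (cases C rule: prune.cases)
  case (2 e f s)
  with assms have "1/2 \<le> edge_accuracy (f, s)" by (intro edge_accuracy_ge_half) simp_all
  with 2 show ?thesis
    by (simp add: accuracy_Node edge_accuracy_merge_half) (simp add: edge_accuracy_def)
next
  case (3 f s e)
  with assms have "1/2 \<le> edge_accuracy (f, s)" by (intro edge_accuracy_ge_half) simp_all
  with 3 show ?thesis
    by (simp add: accuracy_Node edge_accuracy_merge_half) (simp add: edge_accuracy_def)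
qed (use assms edge_accuracy_plug_merge_half_le_prune_sub in \<open>fastforce simp: accuracy_Node\<close>)+

theorem mainTheorem8:
  fixes T :: ptree and C :: ctx and a b :: real
  assumes "T = plug C (Node (a, Leaf) (b, Leaf))"
    and "valid T"
    and "leaves T \<ge> 3"
  shows "RA (T_dd C) \<ge> RA (T_half C)"
proof -
  have "valid_ctx C" using assms(1,2) valid_ctx_plug by simp
  then have "accuracy (plug_merge C (1/2) Leaf) \<le> accuracy_rt (prune C)"
    by (rule accuracy_plug_merge_half_le_prune)
  then show ?thesis by (simp add: RA_eq_accuracy_rt T_dd_def T_half_def)
qed

end
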